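(* Let $a,b\ge0$. If $f_n\to f$ in $\mathcal{A}_a$ and $g_n\to g$ in $\mathcal{A}_b$, then $f_ng_n\to fg$ in $\mathcal{A}_{a+b}$.
   Context: For $b>0$, $\|f\|_b=\sup_{k\in\mathbb{N}_0}b^{-k}|f^{(k)}(0)|$; for $a\ge0$, $\mathcal{A}_a=\{f\text{ entire}:\|f\|_b<\infty\ \forall b>a\}$ with the locally convex topology generated by $\{\|\cdot\|_b:b>a\}$. *)

theory Defs
  imports "HOL-Analysis.Analysis"
begin

definition growth_norm :: "real \<Rightarrow> (complex \<Rightarrow> complex) \<Rightarrow> ereal" where
  "growth_norm b f = (SUP k::nat. ereal (norm ((deriv ^^ k) f 0) / b ^ k))"

definition space_A :: "real \<Rightarrow> (complex \<Rightarrow> complex) set" where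
  "space_A a = {f. f holomorphic_on UNIV \<and> (\<forall>b>a. growth_norm b f < \<infinity>)}"

text \<open>Convergence of a sequence in the locally convex topology of A_a generated by the
  seminorms norm_b (b > a): every term and the limit lie in A_a and each seminorm of the
  difference tends to 0.\<close>
definition converges_in_A :: "real \<Rightarrow> (nat \<Rightarrow> complex \<Rightarrow> complex) \<Rightarrow> (complex \<Rightarrow> complex) \<Rightarrow> bool" where
  "converges_in_A a fs f \<longleftrightarrow>
     (\<forall>n. fs n \<in> space_A a) \<and> f \<in> space_A a \<and>
     (\<forall>b>a. (\<lambda>n. growth_norm b (\<lambda>z. fs n z - f z)) \<longlonglongrightarrow> 0)"

end

theory Submission
  imports Defs "HOL-Complex_Analysis.Complex_Analysis"
begin

text \<open>By the Leibniz rule and the binomial theorem the seminorms are submultiplicative,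
  norm_(c1+c2) (u v) \<le> norm_c1 u * norm_c2 v. Given c > a + b, split c = c1 + c2 with c1 > a
  and c2 > b. Since f_n g_n - f g = (f_n - f)(g_n - g) + (f_n - f) g + f (g_n - g), the triangle
  inequality and submultiplicativity bound norm_c (f_n g_n - f g) by a real null sequence.\<close>

lemma growth_norm_nonneg: "0 \<le> growth_norm c h"
proof -
  have "ereal (norm ((deriv ^^ 0) h 0) / c ^ 0) \<le> growth_norm c h"
    unfolding growth_norm_def by (rule SUP_upper) simp
  then show ?thesis by (rule order_trans[rotated]) simp
qed

lemma growth_norm_eq_ereal:
  "growth_norm c h < \<infinity> \<Longrightarrow> growth_norm c h = ereal (real_of_ereal (growth_norm c h))"
  using growth_norm_nonneg[of c h] by (cases "growth_norm c h") auto

lemma growth_norm_le_iff: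
  assumes "c > 0"
  shows "growth_norm c h \<le> ereal M \<longleftrightarrow> (\<forall>k. norm ((deriv ^^ k) h 0) \<le> M * c ^ k)"
  using assms unfolding growth_norm_def by (simp add: SUP_le_iff pos_divide_le_eq)

lemma growth_norm_add_le:
  assumes "c > 0" "u holomorphic_on UNIV" "v holomorphic_on UNIV"
  shows "growth_norm c (\<lambda>z. u z + v z) \<le> growth_norm c u + growth_norm c v"
  unfolding growth_norm_def
proof (rule SUP_least)
  fix k :: nat
  have "norm ((deriv ^^ k) (\<lambda>z. u z + v z) 0) / c ^ k
      \<le> norm ((deriv ^^ k) u 0) / c ^ k + norm ((deriv ^^ k) v 0) / c ^ k"
    using assms by (simp add: higher_deriv_add divide_right_mono norm_triangle_ineq flip: add_divide_distrib)
  also have "ereal \<dots> \<le> (SUP j. ereal (norm ((deriv ^^ j) u 0) / c ^ j))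
      + (SUP j. ereal (norm ((deriv ^^ j) v 0) / c ^ j))"
    unfolding plus_ereal.simps(1)[symmetric] by (intro add_mono SUP_upper) auto
  finally show "ereal (norm ((deriv ^^ k) (\<lambda>z. u z + v z) 0) / c ^ k) \<le> \<dots>"
    by simp
qed

lemma norm_higher_deriv_mult_le:
  fixes u v :: "complex \<Rightarrow> complex"
  assumes "u holomorphic_on S" "v holomorphic_on S" "open S" "z \<in> S" "c1 \<ge> 0" "c2 \<ge> 0"
    and U: "\<And>j. norm ((deriv ^^ j) u z) \<le> U * c1 ^ j"
    and V: "\<And>j. norm ((deriv ^^ j) v z) \<le> V * c2 ^ j"
  shows "norm ((deriv ^^ k) (\<lambda>w. u w * v w) z) \<le> U * V * (c1 + c2) ^ k"
proof -
  have "U \<ge> 0" using order_trans[OF norm_ge_zero U[of 0]] by simp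
  have "norm ((deriv ^^ k) (\<lambda>w. u w * v w) z)
      = norm (\<Sum>i = 0..k. of_nat (k choose i) * (deriv ^^ i) u z * (deriv ^^ (k - i)) v z)"
    using assms by (simp add: higher_deriv_mult)
  also have "\<dots> \<le> (\<Sum>i = 0..k. real (k choose i) * (norm ((deriv ^^ i) u z) * norm ((deriv ^^ (k - i)) v z)))"
    by (rule order_trans[OF norm_sum]) (simp add: norm_mult mult.assoc)
  also have "\<dots> \<le> (\<Sum>i = 0..k. real (k choose i) * ((U * c1 ^ i) * (V * c2 ^ (k - i))))"
    using \<open>U \<ge> 0\<close> \<open>c1 \<ge> 0\<close> by (intro sum_mono mult_left_mono mult_mono U V) auto
  also have "\<dots> = U * V * (c1 + c2) ^ k"
    by (simp add: binomial_ring atLeast0AtMost sum_distrib_left mult_ac)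
  finally show ?thesis .
qed

lemma growth_norm_mult_le:
  assumes "c1 > 0" "c2 > 0" "u holomorphic_on UNIV" "v holomorphic_on UNIV"
    and "growth_norm c1 u \<le> ereal U" "growth_norm c2 v \<le> ereal V"
  shows "growth_norm (c1 + c2) (\<lambda>z. u z * v z) \<le> ereal (U * V)"
  using assms norm_higher_deriv_mult_le[of u UNIV v 0 c1 c2 U V]
  by (simp add: growth_norm_le_iff)

lemma growth_norm_tendsto_zeroI:
  assumes "eventually (\<lambda>n. growth_norm c (h n) \<le> ereal (r n)) sequentially" "r \<longlonglongrightarrow> 0"
  shows "(\<lambda>n. growth_norm c (h n)) \<longlonglongrightarrow> 0"
proof (rule tendsto_sandwich[OF _ assms(1)])
  show "eventually (\<lambda>n. 0 \<le> growth_norm c (h n)) sequentially"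
    by (simp add: growth_norm_nonneg)
  show "(\<lambda>n. ereal (r n)) \<longlonglongrightarrow> 0"
    using assms(2) by (simp add: zero_ereal_def)
qed simp

lemma growth_norm_tendsto_zeroD:
  assumes "(\<lambda>n. growth_norm c (h n)) \<longlonglongrightarrow> 0"
  shows "(\<lambda>n. real_of_ereal (growth_norm c (h n))) \<longlonglongrightarrow> 0"
    and "eventually (\<lambda>n. growth_norm c (h n) = ereal (real_of_ereal (growth_norm c (h n)))) sequentially"
  using assms lim_real_of_ereal real_lim_then_eventually_real unfolding zero_ereal_def by blast+

lemma tendsto_growth_norm_mult_diff:
  assumes "c1 > 0" "c2 > 0"
    and hol: "\<And>n. fs n holomorphic_on UNIV" "f holomorphic_on UNIV"
      "\<And>n. gs n holomorphic_on UNIV" "g holomorphic_on UNIV"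
    and "growth_norm c1 f < \<infinity>" "growth_norm c2 g < \<infinity>"
    and lim_f: "(\<lambda>n. growth_norm c1 (\<lambda>z. fs n z - f z)) \<longlonglongrightarrow> 0"
    and lim_g: "(\<lambda>n. growth_norm c2 (\<lambda>z. gs n z - g z)) \<longlonglongrightarrow> 0"
  shows "(\<lambda>n. growth_norm (c1 + c2) (\<lambda>z. fs n z * gs n z - f z * g z)) \<longlonglongrightarrow> 0"
proof -
  define F where "F = real_of_ereal (growth_norm c1 f)"
  define G where "G = real_of_ereal (growth_norm c2 g)"
  define df where "df n = real_of_ereal (growth_norm c1 (\<lambda>z. fs n z - f z))" for n
  define dg where "dg n = real_of_ereal (growth_norm c2 (\<lambda>z. gs n z - g z))" for n
  have F: "growth_norm c1 f = ereal F" and G: "growth_norm c2 g = ereal G"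
    using assms growth_norm_eq_ereal unfolding F_def G_def by blast+
  have "(\<lambda>n. df n * dg n + df n * G + F * dg n) \<longlonglongrightarrow> 0 * 0 + 0 * G + F * 0"
    unfolding df_def dg_def
    by (intro tendsto_intros growth_norm_tendsto_zeroD(1)[OF lim_f] growth_norm_tendsto_zeroD(1)[OF lim_g])
  moreover have "eventually (\<lambda>n. growth_norm (c1 + c2) (\<lambda>z. fs n z * gs n z - f z * g z)
      \<le> ereal (df n * dg n + df n * G + F * dg n)) sequentially"
    using growth_norm_tendsto_zeroD(2)[OF lim_f] growth_norm_tendsto_zeroD(2)[OF lim_g]
  proof eventually_elim
    case (elim n)
    define u where "u z = fs n z - f z" for z
    define v where "v z = gs n z - g z" for z
    have hol_uv: "u holomorphic_on UNIV" "v holomorphic_on UNIV"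
      unfolding u_def v_def using hol by (auto intro!: holomorphic_intros)
    have u: "growth_norm c1 u = ereal (df n)" and v: "growth_norm c2 v = ereal (dg n)"
      using elim unfolding u_def v_def df_def dg_def by simp_all
    have "(\<lambda>z. fs n z * gs n z - f z * g z) = (\<lambda>z. (u z * v z + u z * g z) + f z * v z)"
      unfolding u_def v_def by (auto simp: algebra_simps)
    then have "growth_norm (c1 + c2) (\<lambda>z. fs n z * gs n z - f z * g z)
        \<le> growth_norm (c1 + c2) (\<lambda>z. u z * v z + u z * g z) + growth_norm (c1 + c2) (\<lambda>z. f z * v z)"
      using assms hol_uv by (auto intro!: growth_norm_add_le holomorphic_intros)
    also have "\<dots> \<le> (growth_norm (c1 + c2) (\<lambda>z. u z * v z) + growth_norm (c1 + c2) (\<lambda>z. u z * g z))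
        + growth_norm (c1 + c2) (\<lambda>z. f z * v z)"
      using assms hol_uv by (intro add_mono growth_norm_add_le holomorphic_intros) auto
    also have "\<dots> \<le> (ereal (df n * dg n) + ereal (df n * G)) + ereal (F * dg n)"
      using assms hol_uv u v F G by (intro add_mono growth_norm_mult_le) auto
    finally show ?case by simp
  qed
  ultimately show ?thesis by (intro growth_norm_tendsto_zeroI) simp_all
qed

lemma split_above_sum:
  fixes a b c :: real
  assumes "a + b < c"
  obtains c1 c2 where "a < c1" "b < c2" "c1 + c2 = c"
proof
  show "a < a + (c - a - b) / 2" "b < b + (c - a - b) / 2" using assms by simp_all
qed simp

lemma mult_in_space_A:
  assumes "u \<in> space_A a" "v \<in> space_A b" "a \<ge> 0" "b \<ge> 0"
  shows "(\<lambda>z. u z * v z) \<in> space_A (a + b)"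
proof -
  have "growth_norm c (\<lambda>z. u z * v z) < \<infinity>" if "a + b < c" for c
  proof -
    obtain c1 c2 where c: "a < c1" "b < c2" "c1 + c2 = c"
      using split_above_sum[OF \<open>a + b < c\<close>] .
    then have "growth_norm c1 u = ereal (real_of_ereal (growth_norm c1 u))"
      "growth_norm c2 v = ereal (real_of_ereal (growth_norm c2 v))"
      using assms by (auto simp: space_A_def intro!: growth_norm_eq_ereal)
    then have "growth_norm c (\<lambda>z. u z * v z)
        \<le> ereal (real_of_ereal (growth_norm c1 u) * real_of_ereal (growth_norm c2 v))"
      using assms c by (auto simp: space_A_def intro!: growth_norm_mult_le)
    then show ?thesis by (rule order.strict_trans1) simp
  qed
  then show ?thesis
    using assms by (auto simp: space_A_def intro!: holomorphic_intros)
qed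

theorem corollary1p3:
  fixes a b :: real
    and fs gs :: "nat \<Rightarrow> complex \<Rightarrow> complex"
    and f g :: "complex \<Rightarrow> complex"
  assumes "a \<ge> 0" and "b \<ge> 0"
    and "converges_in_A a fs f"
    and "converges_in_A b gs g"
  shows "converges_in_A (a + b) (\<lambda>n z. fs n z * gs n z) (\<lambda>z. f z * g z)"
proof -
  have A: "\<And>n. fs n \<in> space_A a" "f \<in> space_A a" "\<And>n. gs n \<in> space_A b" "g \<in> space_A b"
    using assms(3,4) by (simp_all add: converges_in_A_def)
  have "(\<lambda>n. growth_norm c (\<lambda>z. fs n z * gs n z - f z * g z)) \<longlonglongrightarrow> 0" if "a + b < c" for c
  proof -
    obtain c1 c2 where c: "a < c1" "b < c2" "c1 + c2 = c"
      using split_above_sum[OF \<open>a + b < c\<close>] .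
    then show ?thesis
      using assms A unfolding converges_in_A_def space_A_def
      by (auto intro!: tendsto_growth_norm_mult_diff)
  qed
  then show ?thesis
    using assms A mult_in_space_A unfolding converges_in_A_def by auto
qed

end
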